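(* There is a constant $c>0$ such that for every $\rho \geqslant 1$ and every $n$, $\operatorname{xc}(\mathrm{CUT}(n), \rho\,\mathrm{CUT}(n)) \geqslant 2^{cn}$. Consequently, for every $\rho\geqslant 1$, every $\rho$-approximate EF of the Max CUT problem with arbitrary weights (whose associated pair is $P = Q = \mathrm{CUT}(n)$) has size $2^{\Omega(n)}$.
   Context: Let $K_n = (V_n,E_n)$ be the complete graph on $n$ vertices. For $X \subseteq V_n$, $\delta(X)$ is the set of edges with exactly one endpoint in $X$, and $\chi^{\delta(X)} \in \mathbb{R}^{E_n}$ its characteristic vector. The cut polytope is $\mathrm{CUT}(n) = \mathrm{conv}\{\chi^{\delta(X)} \mid X \subseteq V_n\}$. For polyhedra $P\subseteq Q \subseteq \mathbb{R}^d$, an extended formulation of the pair $P,Q$ is a system $Ex+Fy = g$, $y \geqslant \mathbf 0$, $y\in\mathbb{R}^r$, such that $K = \{x \mid \exists y: Ex + Fy = g, y \geqslant \mathbf 0\}$ satisfies $P \subseteq K \subseteq Q$; its size is $r$, and $\operatorname{xc}(P,Q)$ is the minimum size of such an EF. A $\rho$-approximate EF for Max CUT with arbitrary weights is an EF of the pair $\mathrm{CUT}(n), \rho\,\mathrm{CUT}(n)$. *)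

theory Defs
  imports "HOL-Analysis.Analysis"
begin

text \<open>Vertices of K_n are 0,...,n-1; the edge {i,j} (i<j) is encoded as the pair (i,j).
  Vectors in R^{E_n} are functions (nat \<times> nat) \<Rightarrow> real that vanish outside E_n.\<close>

definition edges_K :: "nat \<Rightarrow> (nat \<times> nat) set" where
  "edges_K n = {(i, j). i < j \<and> j < n}"

definition cut_vec :: "nat \<Rightarrow> nat set \<Rightarrow> (nat \<times> nat) \<Rightarrow> real" where
  "cut_vec n X = (\<lambda>(i, j). if (i, j) \<in> edges_K n \<and> ((i \<in> X) \<noteq> (j \<in> X)) then 1 else 0)"

definition CUT :: "nat \<Rightarrow> ((nat \<times> nat) \<Rightarrow> real) set" where
  "CUT n = {x. \<exists>l :: nat set \<Rightarrow> real.
              (\<forall>X \<in> Pow {..<n}. l X \<ge> 0) \<and> (\<Sum>X \<in> Pow {..<n}. l X) = 1 \<and>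
              x = (\<lambda>e. \<Sum>X \<in> Pow {..<n}. l X * cut_vec n X e)}"

definition scale_set :: "real \<Rightarrow> ('a \<Rightarrow> real) set \<Rightarrow> ('a \<Rightarrow> real) set" where
  "scale_set \<rho> P = (\<lambda>x. (\<lambda>e. \<rho> * x e)) ` P"

definition EF_proj :: "'a set \<Rightarrow> nat \<Rightarrow> nat \<Rightarrow> (nat \<Rightarrow> 'a \<Rightarrow> real) \<Rightarrow>
    (nat \<Rightarrow> nat \<Rightarrow> real) \<Rightarrow> (nat \<Rightarrow> real) \<Rightarrow> ('a \<Rightarrow> real) set" where
  "EF_proj D m r E F g = {x. (\<forall>d. d \<notin> D \<longrightarrow> x d = 0) \<and>
      (\<exists>y :: nat \<Rightarrow> real. (\<forall>i < r. y i \<ge> 0) \<and>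
         (\<forall>k < m. (\<Sum>d \<in> D. E k d * x d) + (\<Sum>i < r. F k i * y i) = g k))}"

definition has_EF :: "'a set \<Rightarrow> ('a \<Rightarrow> real) set \<Rightarrow> ('a \<Rightarrow> real) set \<Rightarrow> nat \<Rightarrow> bool" where
  "has_EF D P Q r = (\<exists>m E F g. P \<subseteq> EF_proj D m r E F g \<and> EF_proj D m r E F g \<subseteq> Q)"

definition xc :: "'a set \<Rightarrow> ('a \<Rightarrow> real) set \<Rightarrow> ('a \<Rightarrow> real) set \<Rightarrow> nat" where
  "xc D P Q = (LEAST r. has_EF D P Q r)"

end

theory Submission
  imports Defs
begin

text \<open>For \<open>b \<subseteq> {0, \<dots>, N - 1}\<close> the hypermetric inequality with coefficients \<open>1\<close> on \<open>b\<close>, \<open>2 - |b|\<close>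
  on vertex \<open>N\<close> and \<open>-1\<close> on vertex \<open>N + 1\<close> is homogeneous, hence valid on \<open>\<rho> CUT(N + 2)\<close> as well.
  At the cut vector of \<open>a \<union> {N + 1}\<close> its slack is \<open>(|a \<inter> b| - 1)(|a \<inter> b| - 2)\<close>: zero when
  \<open>|a \<inter> b| = 1\<close> and positive when \<open>a \<inter> b = {}\<close>.
  Given an extended formulation of size \<open>r\<close>, every such entry with \<open>b \<noteq> {}\<close> is covered by one of
  \<open>r\<close> rectangles: those rows whose lift uses a fixed variable \<open>y\<^sub>i\<close>, against those columns on
  which all these rows have positive slack (a convexity argument on the lifted polyhedron).
  A rectangle avoiding pairs with \<open>|a \<inter> b| = 1\<close> contains at most \<open>2\<^sup>N\<close> disjoint pairs, while
  there are \<open>3\<^sup>N\<close> disjoint pairs, \<open>2\<^sup>N\<close> of them with \<open>b = {}\<close>; hence \<open>3\<^sup>N \<le> (r + 1) 2\<^sup>N\<close>.\<close>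

section \<open>Valid inequalities of a projected polyhedron\<close>

locale EF_system =
  fixes D :: "'a set" and m r :: nat and E :: "nat \<Rightarrow> 'a \<Rightarrow> real"
    and F :: "nat \<Rightarrow> nat \<Rightarrow> real" and g :: "nat \<Rightarrow> real"
begin

definition lift :: "('a \<Rightarrow> real) \<Rightarrow> (nat \<Rightarrow> real) \<Rightarrow> bool" where
  "lift x y \<longleftrightarrow> (\<forall>d. d \<notin> D \<longrightarrow> x d = 0) \<and> (\<forall>i<r. 0 \<le> y i) \<and>
     (\<forall>k<m. (\<Sum>d\<in>D. E k d * x d) + (\<Sum>i<r. F k i * y i) = g k)"

definition lift_of :: "('a \<Rightarrow> real) \<Rightarrow> nat \<Rightarrow> real" where
  "lift_of x = (SOME y. lift x y)"

definition slack :: "real \<Rightarrow> ('a \<Rightarrow> real) \<Rightarrow> ('a \<Rightarrow> real) \<Rightarrow> real" where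
  "slack \<beta> w x = \<beta> - (\<Sum>d\<in>D. w d * x d)"

definition valid :: "real \<Rightarrow> ('a \<Rightarrow> real) \<Rightarrow> bool" where
  "valid \<beta> w \<longleftrightarrow> (\<forall>x y. lift x y \<longrightarrow> 0 \<le> slack \<beta> w x)"

lemma EF_proj_iff_lift: "x \<in> EF_proj D m r E F g \<longleftrightarrow> (\<exists>y. lift x y)"
  unfolding EF_proj_def lift_def by auto

lemma lift_lift_of: "x \<in> EF_proj D m r E F g \<Longrightarrow> lift x (lift_of x)"
  unfolding EF_proj_iff_lift lift_of_def by (metis someI_ex)

lemma lift_nonneg: "lift x y \<Longrightarrow> i < r \<Longrightarrow> 0 \<le> y i"
  unfolding lift_def by blast

lemma valid_slack_nonneg: "valid \<beta> w \<Longrightarrow> lift x y \<Longrightarrow> 0 \<le> slack \<beta> w x"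
  unfolding valid_def by blast

lemma lift_affine_comb:
  assumes "lift x1 y1" "lift x2 y2" "a + b = 1" "\<forall>i<r. 0 \<le> a * y1 i + b * y2 i"
  shows "lift (\<lambda>d. a * x1 d + b * x2 d) (\<lambda>i. a * y1 i + b * y2 i)"
  unfolding lift_def
proof (intro conjI allI impI)
  fix d assume "d \<notin> D"
  then show "a * x1 d + b * x2 d = 0" using assms(1,2) by (simp add: lift_def)
next
  fix i assume "i < r"
  then show "0 \<le> a * y1 i + b * y2 i" using assms(4) by simp
next
  fix k assume k: "k < m"
  have "(\<Sum>d\<in>D. E k d * (a * x1 d + b * x2 d)) + (\<Sum>i<r. F k i * (a * y1 i + b * y2 i))
     = a * ((\<Sum>d\<in>D. E k d * x1 d) + (\<Sum>i<r. F k i * y1 i))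
       + b * ((\<Sum>d\<in>D. E k d * x2 d) + (\<Sum>i<r. F k i * y2 i))"
    by (simp add: algebra_simps sum.distrib sum_distrib_left)
  also have "\<dots> = (a + b) * g k" using assms(1,2) k by (simp add: lift_def algebra_simps)
  finally show "(\<Sum>d\<in>D. E k d * (a * x1 d + b * x2 d)) + (\<Sum>i<r. F k i * (a * y1 i + b * y2 i)) = g k"
    using assms(3) by simp
qed

lemma slack_affine_comb:
  assumes "a + b = 1"
  shows "slack \<beta> w (\<lambda>d. a * x1 d + b * x2 d) = a * slack \<beta> w x1 + b * slack \<beta> w x2"
proof -
  have "\<beta> = a * \<beta> + b * \<beta>" using assms by (metis distrib_right mult_1)
  then show ?thesis unfolding slack_def by (simp add: sum.distrib sum_distrib_left algebra_simps)
qed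

lemma lift_mean:
  assumes "finite S" "S \<noteq> {}" "\<And>s. s \<in> S \<Longrightarrow> lift (x s) (y s)"
  shows "lift (\<lambda>d. (\<Sum>s\<in>S. x s d) / card S) (\<lambda>i. (\<Sum>s\<in>S. y s i) / card S)"
  unfolding lift_def
proof (intro conjI allI impI)
  fix d assume "d \<notin> D"
  then show "(\<Sum>s\<in>S. x s d) / card S = 0" using assms(3) by (simp add: lift_def)
next
  fix i assume "i < r"
  then show "0 \<le> (\<Sum>s\<in>S. y s i) / card S"
    using assms(3) by (intro divide_nonneg_nonneg sum_nonneg) (auto simp: lift_def)
next
  have card: "real (card S) > 0" using assms(1,2) by (simp add: card_gt_0_iff)
  fix k assume k: "k < m"
  have "(\<Sum>d\<in>D. E k d * ((\<Sum>s\<in>S. x s d) / card S)) + (\<Sum>i<r. F k i * ((\<Sum>s\<in>S. y s i) / card S))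
     = (\<Sum>s\<in>S. (\<Sum>d\<in>D. E k d * x s d) + (\<Sum>i<r. F k i * y s i)) / card S"
    by (simp add: sum_divide_distrib sum_distrib_left sum.swap[of _ S] sum.distrib add_divide_distrib)
  also have "\<dots> = g k" using assms(3) k card by (simp add: lift_def)
  finally show "(\<Sum>d\<in>D. E k d * ((\<Sum>s\<in>S. x s d) / card S))
      + (\<Sum>i<r. F k i * ((\<Sum>s\<in>S. y s i) / card S)) = g k" .
qed

lemma slack_mean:
  assumes "finite S" "S \<noteq> {}"
  shows "slack \<beta> w (\<lambda>d. (\<Sum>s\<in>S. x s d) / card S) = (\<Sum>s\<in>S. slack \<beta> w (x s)) / card S"
proof -
  have "real (card S) > 0" using assms by (simp add: card_gt_0_iff)
  then show ?thesis
    unfolding slack_def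
    by (simp add: sum_subtractf diff_divide_distrib sum_divide_distrib sum_distrib_left sum.swap[of _ S])
qed

lemma slack_extrapolation:
  assumes "valid \<beta> w" "lift v yv" "lift z yz" "\<forall>i<r. e * yv i \<le> (1 + e) * yz i"
  shows "e * (slack \<beta> w v - slack \<beta> w z) \<le> slack \<beta> w z"
proof -
  have "lift (\<lambda>d. (1 + e) * z d + (- e) * v d) (\<lambda>i. (1 + e) * yz i + (- e) * yv i)"
    by (rule lift_affine_comb[OF assms(3,2)]) (use assms(4) in auto)
  then have "0 \<le> slack \<beta> w (\<lambda>d. (1 + e) * z d + (- e) * v d)"
    by (rule valid_slack_nonneg[OF assms(1)])
  then show ?thesis using slack_affine_comb[of "1 + e" "- e" \<beta> w z v] by (simp add: algebra_simps)
qed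

lemma slack_le_if_lift_vanishes:
  assumes valid: "valid \<beta> w" and v: "lift v yv" and yv: "\<forall>i<r. yv i = 0" and z: "lift z yz"
  shows "slack \<beta> w v \<le> slack \<beta> w z"
proof (rule ccontr)
  assume "\<not> ?thesis"
  then have lt: "slack \<beta> w z < slack \<beta> w v" by simp
  define e where "e = slack \<beta> w z / (slack \<beta> w v - slack \<beta> w z) + 1"
  have "0 \<le> slack \<beta> w z" using valid z by (rule valid_slack_nonneg)
  then have "0 \<le> e" unfolding e_def using lt by simp
  then have "e * (slack \<beta> w v - slack \<beta> w z) \<le> slack \<beta> w z"
    using slack_extrapolation[OF valid v z] yv lift_nonneg[OF z] by simp
  moreover have "e * (slack \<beta> w v - slack \<beta> w z) = slack \<beta> w z + (slack \<beta> w v - slack \<beta> w z)"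
    unfolding e_def using lt by (simp add: field_simps)
  ultimately show False using lt by linarith
qed

lemma slack_nonpos_if_support_subset:
  assumes valid: "valid \<beta> w" and v: "lift v yv" and z: "lift z yz" and z0: "slack \<beta> w z \<le> 0"
    and supp: "\<forall>i<r. 0 < yv i \<longrightarrow> 0 < yz i"
  shows "slack \<beta> w v \<le> 0"
proof -
  define S where "S = {i. i < r \<and> 0 < yv i}"
  define e where "e = Min (insert 1 ((\<lambda>i. yz i / yv i) ` S))"
  have fin: "finite S" unfolding S_def by simp
  have e0: "0 < e" unfolding e_def using fin supp by (auto simp: S_def)
  have "e * yv i \<le> (1 + e) * yz i" if i: "i < r" for i
  proof (cases "i \<in> S")
    case True
    then have "e \<le> yz i / yv i" unfolding e_def using fin by simp
    then have "e * yv i \<le> yz i" using True by (simp add: S_def pos_le_divide_eq)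
    moreover have "0 \<le> e * yz i" using lift_nonneg[OF z i] e0 by simp
    ultimately show ?thesis by (simp add: distrib_right)
  next
    case False
    then have "yv i = 0" using lift_nonneg[OF v i] i by (simp add: S_def)
    then show ?thesis using lift_nonneg[OF z i] e0 by simp
  qed
  then have "e * (slack \<beta> w v - slack \<beta> w z) \<le> slack \<beta> w z"
    by (intro slack_extrapolation[OF valid v z]) auto
  then have "slack \<beta> w v - slack \<beta> w z \<le> 0"
    using z0 e0 mult_pos_pos[of e "slack \<beta> w v - slack \<beta> w z"] by linarith
  then show ?thesis using z0 by simp
qed

text \<open>Every positive entry of the slack matrix lies in a rectangle induced by a single lifting
  variable.\<close>
lemma exists_coordinate_forcing_positive_slack:
  assumes valid: "valid \<beta> w" and v: "lift v yv" and pos: "0 < slack \<beta> w v"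
    and supp: "\<exists>i<r. 0 < yv i"
  shows "\<exists>i<r. 0 < yv i \<and> (\<forall>z yz. lift z yz \<longrightarrow> 0 < yz i \<longrightarrow> 0 < slack \<beta> w z)"
proof (rule ccontr)
  assume "\<not> ?thesis"
  then have "\<forall>i\<in>{i. i < r \<and> 0 < yv i}. \<exists>zy. lift (fst zy) (snd zy) \<and> 0 < snd zy i \<and> slack \<beta> w (fst zy) \<le> 0"
    by force
  then obtain zy where zy: "\<And>i. i < r \<Longrightarrow> 0 < yv i \<Longrightarrow>
      lift (fst (zy i)) (snd (zy i)) \<and> 0 < snd (zy i) i \<and> slack \<beta> w (fst (zy i)) \<le> 0"
    by (metis (mono_tags, lifting) mem_Collect_eq)
  define S where "S = {i. i < r \<and> 0 < yv i}"
  have fin: "finite S" and ne: "S \<noteq> {}" using supp unfolding S_def by auto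
  have card: "real (card S) > 0" using fin ne by (simp add: card_gt_0_iff)
  define z where "z = (\<lambda>d. (\<Sum>s\<in>S. fst (zy s) d) / card S)"
  define yz where "yz = (\<lambda>i. (\<Sum>s\<in>S. snd (zy s) i) / card S)"
  have z_lift: "lift z yz" unfolding z_def yz_def
    by (rule lift_mean[OF fin ne]) (use zy in \<open>auto simp: S_def\<close>)
  have "slack \<beta> w z \<le> 0" unfolding z_def slack_mean[OF fin ne]
    using zy card by (intro divide_nonpos_pos sum_nonpos) (auto simp: S_def)
  moreover have "0 < yz i" if "i < r" "0 < yv i" for i
  proof -
    have "i \<in> S" using that by (simp add: S_def)
    then have "snd (zy i) i \<le> (\<Sum>s\<in>S. snd (zy s) i)"
      using fin zy lift_nonneg \<open>i < r\<close> by (intro member_le_sum) (auto simp: S_def)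
    then show ?thesis unfolding yz_def using zy[OF that] card by simp
  qed
  ultimately have "slack \<beta> w v \<le> 0"
    using slack_nonpos_if_support_subset[OF valid v z_lift] by blast
  with pos show False by simp
qed

end

section \<open>Cut vectors\<close>

lemma finite_edges_K: "finite (edges_K n)"
  by (rule finite_subset[of _ "{..<n} \<times> {..<n}"]) (auto simp: edges_K_def)

lemma cut_vec_eq_0: "e \<notin> edges_K n \<Longrightarrow> cut_vec n X e = 0"
  unfolding cut_vec_def by (cases e) auto

lemma cut_vec_nonneg: "0 \<le> cut_vec n X e"
  and cut_vec_le_1: "cut_vec n X e \<le> 1"
  unfolding cut_vec_def by (cases e, auto)+

lemma cut_vec_empty: "cut_vec n {} = (\<lambda>e. 0)"
  unfolding cut_vec_def by auto

lemma cut_vec_in_CUT: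
  assumes "X \<subseteq> {..<n}"
  shows "cut_vec n X \<in> CUT n"
proof -
  have "Pow {..<n} \<inter> {X} = {X}" using assms by auto
  then have x: "cut_vec n X = (\<lambda>e. \<Sum>Y\<in>Pow {..<n}. of_bool (Y = X) * cut_vec n Y e)"
    and sum: "(\<Sum>Y\<in>Pow {..<n}. of_bool (Y = X)) = (1 :: real)"
    by simp_all
  show ?thesis
    unfolding CUT_def by (intro CollectI exI[of _ "\<lambda>Y. of_bool (Y = X)"] conjI ballI x sum) simp
qed

text \<open>Mixing in the zero cut vector \<open>cut_vec n {}\<close> shrinks \<open>CUT n\<close> towards the origin.\<close>
lemma CUT_subset_scale_set:
  assumes "1 \<le> \<rho>"
  shows "CUT n \<subseteq> scale_set \<rho> (CUT n)"
proof
  fix x assume "x \<in> CUT n"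
  then obtain l where l: "\<forall>X\<in>Pow {..<n}. 0 \<le> l X" "(\<Sum>X\<in>Pow {..<n}. l X) = 1"
    "x = (\<lambda>e. \<Sum>X\<in>Pow {..<n}. l X * cut_vec n X e)" unfolding CUT_def by blast
  define l' where "l' X = l X / \<rho> + (if X = {} then 1 - 1 / \<rho> else 0)" for X
  have nonneg: "\<forall>X\<in>Pow {..<n}. 0 \<le> l' X"
    using l(1) assms by (simp add: l'_def field_simps)
  have sum: "(\<Sum>X\<in>Pow {..<n}. l' X) = 1"
    unfolding l'_def sum.distrib using l(2) by (simp add: sum_divide_distrib[symmetric] sum.delta)
  have "l' X * cut_vec n X e = l X * cut_vec n X e / \<rho>" for X e
    by (cases "X = {}") (simp_all add: l'_def cut_vec_empty)
  then have "(\<lambda>e. x e / \<rho>) = (\<lambda>e. \<Sum>X\<in>Pow {..<n}. l' X * cut_vec n X e)"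
    unfolding l(3) by (simp add: sum_divide_distrib)
  with nonneg sum have in_CUT: "(\<lambda>e. x e / \<rho>) \<in> CUT n"
    unfolding CUT_def by (intro CollectI exI[of _ l']) simp
  have "x = (\<lambda>e. \<rho> * (x e / \<rho>))" using assms by simp
  from this in_CUT show "x \<in> scale_set \<rho> (CUT n)"
    unfolding scale_set_def by (rule image_eqI)
qed

lemma scale_set_CUTE:
  assumes "x \<in> scale_set \<rho> (CUT n)"
  obtains l where "\<forall>X\<in>Pow {..<n}. 0 \<le> l X" "(\<Sum>X\<in>Pow {..<n}. l X) = 1"
    "x = (\<lambda>e. \<rho> * (\<Sum>X\<in>Pow {..<n}. l X * cut_vec n X e))"
  using assms unfolding scale_set_def CUT_def by auto

lemma scale_set_CUT_le_0:
  assumes "0 \<le> \<rho>" "x \<in> scale_set \<rho> (CUT n)"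
    and cuts: "\<And>X. X \<subseteq> {..<n} \<Longrightarrow> (\<Sum>e\<in>edges_K n. w e * cut_vec n X e) \<le> 0"
  shows "(\<Sum>e\<in>edges_K n. w e * x e) \<le> 0"
proof -
  obtain l where l: "\<forall>X\<in>Pow {..<n}. 0 \<le> l X"
    "x = (\<lambda>e. \<rho> * (\<Sum>X\<in>Pow {..<n}. l X * cut_vec n X e))"
    using scale_set_CUTE[OF assms(2)] by blast
  have "(\<Sum>e\<in>edges_K n. w e * x e)
      = \<rho> * (\<Sum>X\<in>Pow {..<n}. l X * (\<Sum>e\<in>edges_K n. w e * cut_vec n X e))"
    unfolding l(2) by (simp add: sum_distrib_left sum.swap[of _ "edges_K n"] algebra_simps)
  also have "\<dots> \<le> 0"
  proof (intro mult_nonneg_nonpos[OF assms(1)] sum_nonpos)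
    fix X assume "X \<in> Pow {..<n}"
    then show "l X * (\<Sum>e\<in>edges_K n. w e * cut_vec n X e) \<le> 0"
      using l(1) cuts by (simp add: mult_nonneg_nonpos)
  qed
  finally show ?thesis .
qed

lemma scale_set_CUT_bounds:
  assumes "0 \<le> \<rho>" "x \<in> scale_set \<rho> (CUT n)"
  shows "0 \<le> x e" "x e \<le> \<rho>"
proof -
  obtain l where l: "\<forall>X\<in>Pow {..<n}. 0 \<le> l X" "(\<Sum>X\<in>Pow {..<n}. l X) = 1"
    "x = (\<lambda>e. \<rho> * (\<Sum>X\<in>Pow {..<n}. l X * cut_vec n X e))"
    using scale_set_CUTE[OF assms(2)] by blast
  have "0 \<le> (\<Sum>X\<in>Pow {..<n}. l X * cut_vec n X e)"
    using l(1) cut_vec_nonneg by (intro sum_nonneg mult_nonneg_nonneg) auto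
  moreover have "(\<Sum>X\<in>Pow {..<n}. l X * cut_vec n X e) \<le> (\<Sum>X\<in>Pow {..<n}. l X)"
    using l(1) cut_vec_le_1 by (intro sum_mono) (simp add: mult_left_le)
  ultimately show "0 \<le> x e" "x e \<le> \<rho>"
    unfolding l(3) using l(2) assms(1) by (simp_all add: mult_left_le)
qed

lemma sum_edges_K_cut_vec:
  fixes f :: "nat \<Rightarrow> real"
  shows "(\<Sum>e\<in>edges_K n. f (fst e) * f (snd e) * cut_vec n X e)
       = (\<Sum>i\<in>{..<n} \<inter> X. f i) * (\<Sum>j\<in>{..<n} - X. f j)"
proof -
  define h where "h = (\<lambda>e. f (fst e) * f (snd e))"
  define P1 where "P1 = {(i, j). i \<in> {..<n} \<inter> X \<and> j \<in> {..<n} - X \<and> i < j}"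
  define P2 where "P2 = {(j, i). i \<in> {..<n} \<inter> X \<and> j \<in> {..<n} - X \<and> j < i}"
  have fin: "finite P1" "finite P2"
    by (rule finite_subset[of _ "{..<n} \<times> {..<n}"], auto simp: P1_def P2_def)+
  have "(\<Sum>i\<in>{..<n} \<inter> X. f i) * (\<Sum>j\<in>{..<n} - X. f j) = sum h (({..<n} \<inter> X) \<times> ({..<n} - X))"
    unfolding h_def by (simp add: sum_product sum.cartesian_product case_prod_beta)
  also have "({..<n} \<inter> X) \<times> ({..<n} - X) = P1 \<union> prod.swap ` P2"
    unfolding P1_def P2_def by (auto simp: image_iff, metis linorder_neqE_nat)
  also have "sum h \<dots> = sum h P1 + sum h P2"
    using fin by (subst sum.union_disjoint)
      (auto simp: P1_def P2_def sum.reindex h_def mult.commute)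
  also have "\<dots> = sum h (P1 \<union> P2)"
    using fin by (subst sum.union_disjoint) (auto simp: P1_def P2_def)
  also have "\<dots> = (\<Sum>e\<in>edges_K n. h e * cut_vec n X e)"
    using finite_edges_K
    by (subst sum.mono_neutral_cong_left[of "edges_K n" "P1 \<union> P2"])
      (auto simp: P1_def P2_def edges_K_def cut_vec_def split: if_splits)
  finally show ?thesis unfolding h_def ..
qed

section \<open>Existence of extended formulations\<close>

text \<open>The trivial extended formulation of a convex hull: one nonnegative variable per point,
  one equation per coordinate and one normalising equation.\<close>
lemma EF_proj_convex_combinations:
  assumes "finite D" and outside: "\<And>t d. d \<notin> D \<Longrightarrow> p t d = 0"
  shows "\<exists>m E F g. EF_proj D m M E F g =
    {x. \<exists>y. (\<forall>t<M. 0 \<le> y t) \<and> (\<Sum>t<M. y t) = 1 \<and> x = (\<lambda>d. \<Sum>t<M. y t * p t d)}"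
proof -
  obtain h where h: "bij_betw h {0..<card D} D"
    using ex_bij_betw_nat_finite[OF assms(1)] by blast
  define E where "E k d = (if k < card D \<and> d = h k then 1 else 0 :: real)" for k d
  define F where "F k t = (if k < card D then - p t (h k) else 1 :: real)" for k t
  define g where "g k = (if k < card D then 0 else 1 :: real)" for k
  have E_sum: "(\<Sum>d\<in>D. E k d * x d) = (if k < card D then x (h k) else 0)" for k x
  proof -
    have "(\<Sum>d\<in>D. E k d * x d) = (\<Sum>d\<in>D. if k < card D \<and> d = h k then x d else 0)"
      by (rule sum.cong) (simp_all add: E_def)
    then show ?thesis using assms(1) bij_betw_apply[OF h, of k] by (simp add: sum.delta')
  qed
  have F_sum: "(\<Sum>t<M. F k t * y t)
      = (if k < card D then - (\<Sum>t<M. y t * p t (h k)) else (\<Sum>t<M. y t))" for k y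
    by (simp add: F_def sum_negf mult.commute)
  have on_D: "(\<forall>k<card D. x (h k) = f (h k)) \<longleftrightarrow> (\<forall>d\<in>D. x d = f d)" for x f :: "'a \<Rightarrow> real"
  proof
    assume x: "\<forall>k<card D. x (h k) = f (h k)"
    show "\<forall>d\<in>D. x d = f d"
    proof
      fix d assume "d \<in> D"
      then obtain k where "k < card D" "d = h k"
        using bij_betw_imp_surj_on[OF h] by (metis atLeastLessThan_iff imageE)
      then show "x d = f d" using x by simp
    qed
  qed (use bij_betw_apply[OF h] in simp)
  have "EF_proj D (card D + 1) M E F g =
    {x. (\<forall>d. d \<notin> D \<longrightarrow> x d = 0) \<and> (\<exists>y. (\<forall>t<M. 0 \<le> y t) \<and>
        (\<forall>d\<in>D. x d = (\<Sum>t<M. y t * p t d)) \<and> (\<Sum>t<M. y t) = 1)}"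
    unfolding EF_proj_def E_sum F_sum g_def less_Suc_eq Suc_eq_plus1[symmetric] on_D[symmetric]
    by (auto simp: all_conj_distrib)
  also have "\<dots> = {x. \<exists>y. (\<forall>t<M. 0 \<le> y t) \<and> (\<Sum>t<M. y t) = 1 \<and> x = (\<lambda>d. \<Sum>t<M. y t * p t d)}"
    (is "?L = ?R")
  proof (intro set_eqI iffI)
    fix x assume "x \<in> ?L"
    then obtain y where "\<forall>d. d \<notin> D \<longrightarrow> x d = 0" "\<forall>t<M. 0 \<le> y t"
      "\<forall>d\<in>D. x d = (\<Sum>t<M. y t * p t d)" "(\<Sum>t<M. y t) = 1" by blast
    moreover from this have "x = (\<lambda>d. \<Sum>t<M. y t * p t d)"
      by (intro ext) (metis (no_types, lifting) mult_zero_right outside sum.neutral)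
    ultimately show "x \<in> ?R" by blast
  next
    fix x assume "x \<in> ?R"
    then show "x \<in> ?L" by (auto simp: outside)
  qed
  finally show ?thesis by blast
qed

lemma convex_combinations_reindex:
  fixes p :: "'i \<Rightarrow> 'a \<Rightarrow> real"
  assumes h: "bij_betw h {..<card I} I"
  shows "{x. \<exists>y. (\<forall>t<card I. 0 \<le> y t) \<and> (\<Sum>t<card I. y t) = 1 \<and>
              x = (\<lambda>d. \<Sum>t<card I. y t * p (h t) d)}
       = {x. \<exists>l. (\<forall>i\<in>I. 0 \<le> l i) \<and> (\<Sum>i\<in>I. l i) = 1 \<and> x = (\<lambda>d. \<Sum>i\<in>I. l i * p i d)}"
proof -
  have reindex: "(\<Sum>t<card I. f (h t)) = (\<Sum>i\<in>I. f i)" for f :: "_ \<Rightarrow> real"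
    using sum.reindex_bij_betw[OF h] .
  have h_inv: "\<And>t. t < card I \<Longrightarrow> inv_into {..<card I} h (h t) = t"
    and inv_in: "\<And>i. i \<in> I \<Longrightarrow> inv_into {..<card I} h i < card I"
    using h by (auto simp: bij_betw_def intro!: inv_into_into[of _ h "{..<card I}", simplified])
  show ?thesis
  proof (intro set_eqI iffI; elim CollectE exE conjE)
    fix x y assume y: "\<forall>t<card I. 0 \<le> y t" "(\<Sum>t<card I. y t) = 1"
      "x = (\<lambda>d. \<Sum>t<card I. y t * p (h t) d)"
    define l where "l i = y (inv_into {..<card I} h i)" for i
    have "y t = l (h t)" if "t < card I" for t using that by (simp add: l_def h_inv)
    then have sums: "(\<Sum>t<card I. y t * f (h t)) = (\<Sum>i\<in>I. l i * f i)" for f :: "_ \<Rightarrow> real"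
      using reindex[of "\<lambda>i. l i * f i"] by simp
    have "x = (\<lambda>d. \<Sum>i\<in>I. l i * p i d)" unfolding y(3) by (rule ext) (rule sums)
    moreover have "\<forall>i\<in>I. 0 \<le> l i" using y(1) inv_in by (simp add: l_def)
    ultimately show "x \<in> {x. \<exists>l. (\<forall>i\<in>I. 0 \<le> l i) \<and> (\<Sum>i\<in>I. l i) = 1 \<and> x = (\<lambda>d. \<Sum>i\<in>I. l i * p i d)}"
      using y(2) sums[of "\<lambda>_. 1"] by auto
  next
    fix x l assume l: "\<forall>i\<in>I. 0 \<le> l i" "(\<Sum>i\<in>I. l i) = 1" "x = (\<lambda>d. \<Sum>i\<in>I. l i * p i d)"
    have "\<forall>t<card I. 0 \<le> l (h t)" using l(1) bij_betw_apply[OF h] by simp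
    then show "x \<in> {x. \<exists>y. (\<forall>t<card I. 0 \<le> y t) \<and> (\<Sum>t<card I. y t) = 1 \<and>
              x = (\<lambda>d. \<Sum>t<card I. y t * p (h t) d)}"
      using l(2,3) reindex[of l] reindex[of "\<lambda>i. l i * p i _"]
      by (intro CollectI exI[of _ "\<lambda>t. l (h t)"]) auto
  qed
qed

lemma has_EF_CUT: "1 \<le> \<rho> \<Longrightarrow> \<exists>r. has_EF (edges_K n) (CUT n) (scale_set \<rho> (CUT n)) r"
proof -
  assume "1 \<le> \<rho>"
  obtain h where h: "bij_betw h {..<card (Pow {..<n})} (Pow {..<n})"
    using ex_bij_betw_nat_finite[of "Pow {..<n}"] by (auto simp: atLeast0LessThan)
  have "\<exists>m E F g. EF_proj (edges_K n) m (card (Pow {..<n})) E F g =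
    {x. \<exists>y. (\<forall>t<card (Pow {..<n}). 0 \<le> y t) \<and> (\<Sum>t<card (Pow {..<n}). y t) = 1 \<and>
         x = (\<lambda>d. \<Sum>t<card (Pow {..<n}). y t * cut_vec n (h t) d)}"
    by (rule EF_proj_convex_combinations[OF finite_edges_K]) (rule cut_vec_eq_0)
  then obtain m E F g where "EF_proj (edges_K n) m (card (Pow {..<n})) E F g = CUT n"
    unfolding convex_combinations_reindex[OF h] CUT_def by blast
  then show ?thesis
    unfolding has_EF_def using CUT_subset_scale_set[OF \<open>1 \<le> \<rho>\<close>] by blast
qed

section \<open>Disjoint pairs in unique-intersection-free rectangles\<close>

lemma sum_Pow_lessThan_Suc:
  "(\<Sum>a\<in>Pow {..<Suc N}. f a) = (\<Sum>a\<in>Pow {..<N}. f a) + (\<Sum>a\<in>Pow {..<N}. f (insert N a))"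
proof -
  have "inj_on (insert N) (Pow {..<N})" unfolding inj_on_def by auto
  moreover have "Pow {..<N} \<inter> insert N ` Pow {..<N} = {}" by auto
  ultimately show ?thesis by (simp add: lessThan_Suc Pow_insert sum.union_disjoint sum.reindex)
qed

definition disjoint_pairs :: "nat \<Rightarrow> (nat set \<Rightarrow> bool) \<Rightarrow> (nat set \<Rightarrow> bool) \<Rightarrow> nat" where
  "disjoint_pairs N A B =
    (\<Sum>a\<in>Pow {..<N}. \<Sum>b\<in>Pow {..<N}. if A a \<and> B b \<and> a \<inter> b = {} then 1 else 0)"

definition unique_intersection_free :: "nat \<Rightarrow> (nat set \<Rightarrow> bool) \<Rightarrow> (nat set \<Rightarrow> bool) \<Rightarrow> bool" where
  "unique_intersection_free N A B \<longleftrightarrow>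
    (\<forall>a\<in>Pow {..<N}. \<forall>b\<in>Pow {..<N}. A a \<and> B b \<longrightarrow> card (a \<inter> b) \<noteq> 1)"

lemma disjoint_pairs_Suc:
  "disjoint_pairs (Suc N) A B = (\<Sum>a\<in>Pow {..<N}. \<Sum>b\<in>Pow {..<N}.
     (if A a \<and> B b \<and> a \<inter> b = {} then 1 else 0) +
     (if A (insert N a) \<and> B b \<and> a \<inter> b = {} then 1 else 0) +
     (if A a \<and> B (insert N b) \<and> a \<inter> b = {} then 1 else 0))"
  unfolding disjoint_pairs_def sum_Pow_lessThan_Suc sum.distrib[symmetric]
proof (intro sum.cong refl)
  fix a b assume "a \<in> Pow {..<N}" "b \<in> Pow {..<N}"
  then have "a \<inter> insert N b = a \<inter> b" "insert N a \<inter> b = a \<inter> b" "insert N a \<inter> insert N b \<noteq> {}"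
    by auto
  then show "(if A a \<and> B b \<and> a \<inter> b = {} then 1 else 0) +
     (if A a \<and> B (insert N b) \<and> a \<inter> insert N b = {} then 1 else 0) +
     ((if A (insert N a) \<and> B b \<and> insert N a \<inter> b = {} then 1 else 0) +
      (if A (insert N a) \<and> B (insert N b) \<and> insert N a \<inter> insert N b = {} then 1 else 0)) =
     (if A a \<and> B b \<and> a \<inter> b = {} then 1 else 0) +
     (if A (insert N a) \<and> B b \<and> a \<inter> b = {} then 1 else 0) +
     (if A a \<and> B (insert N b) \<and> a \<inter> b = {} then 1 else (0::nat))"
    by simp
qed

lemma disjoint_pairs_all: "disjoint_pairs N (\<lambda>_. True) (\<lambda>_. True) = 3 ^ N"
proof (induction N)
  case (Suc N)
  then show ?case unfolding disjoint_pairs_Suc by (simp add: sum.distrib disjoint_pairs_def)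
qed (simp add: disjoint_pairs_def)

text \<open>If both \<open>A a\<close> and \<open>A (insert N a)\<close> held together with \<open>B (insert N b)\<close> for a disjoint pair,
  the pair \<open>(insert N a, insert N b)\<close> would meet in exactly one element; so each pair counted in
  \<open>N + 1\<close> dimensions is counted by one of two unique-intersection-free rectangles in \<open>N\<close>
  dimensions.\<close>
lemma disjoint_pairs_le_if_unique_intersection_free:
  "unique_intersection_free N A B \<Longrightarrow> disjoint_pairs N A B \<le> 2 ^ N"
proof (induction N arbitrary: A B)
  case 0
  then show ?case by (simp add: disjoint_pairs_def)
next
  case (Suc N)
  let ?A' = "\<lambda>a. A a \<or> A (insert N a)"
  let ?B' = "\<lambda>b. B b \<or> B (insert N b)"
  have "unique_intersection_free N ?A' B"
    unfolding unique_intersection_free_def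
  proof (intro ballI impI)
    fix a b assume ab: "a \<in> Pow {..<N}" "b \<in> Pow {..<N}" "?A' a \<and> B b"
    then have "a \<in> Pow {..<Suc N}" "insert N a \<in> Pow {..<Suc N}" "b \<in> Pow {..<Suc N}"
      "insert N a \<inter> b = a \<inter> b" by auto
    with ab(3) Suc.prems show "card (a \<inter> b) \<noteq> 1"
      unfolding unique_intersection_free_def by metis
  qed
  moreover have "unique_intersection_free N A ?B'"
    unfolding unique_intersection_free_def
  proof (intro ballI impI)
    fix a b assume ab: "a \<in> Pow {..<N}" "b \<in> Pow {..<N}" "A a \<and> ?B' b"
    then have "a \<in> Pow {..<Suc N}" "b \<in> Pow {..<Suc N}" "insert N b \<in> Pow {..<Suc N}"
      "a \<inter> insert N b = a \<inter> b" by auto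
    with ab(3) Suc.prems show "card (a \<inter> b) \<noteq> 1"
      unfolding unique_intersection_free_def by metis
  qed
  ultimately have IH: "disjoint_pairs N ?A' B + disjoint_pairs N A ?B' \<le> 2 ^ N + 2 ^ N"
    using Suc.IH by (meson add_le_mono)
  have "disjoint_pairs (Suc N) A B \<le> (\<Sum>a\<in>Pow {..<N}. \<Sum>b\<in>Pow {..<N}.
      (if ?A' a \<and> B b \<and> a \<inter> b = {} then 1 else 0) + (if A a \<and> ?B' b \<and> a \<inter> b = {} then 1 else 0))"
    unfolding disjoint_pairs_Suc
  proof (intro sum_mono)
    fix a b assume ab: "a \<in> Pow {..<N}" "b \<in> Pow {..<N}"
    have "insert N a \<in> Pow {..<Suc N}" "insert N b \<in> Pow {..<Suc N}" using ab by auto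
    moreover have "card (insert N a \<inter> insert N b) = 1" if "a \<inter> b = {}" using that by auto
    ultimately have "\<not> (A (insert N a) \<and> B (insert N b) \<and> a \<inter> b = {})"
      using Suc.prems unfolding unique_intersection_free_def by blast
    then show "(if A a \<and> B b \<and> a \<inter> b = {} then 1 else 0) +
        (if A (insert N a) \<and> B b \<and> a \<inter> b = {} then 1 else 0) +
        (if A a \<and> B (insert N b) \<and> a \<inter> b = {} then 1 else 0)
      \<le> (if ?A' a \<and> B b \<and> a \<inter> b = {} then 1 else 0) +
        (if A a \<and> ?B' b \<and> a \<inter> b = {} then 1 else (0::nat))"
      by auto
  qed
  also have "\<dots> = disjoint_pairs N ?A' B + disjoint_pairs N A ?B'"
    unfolding disjoint_pairs_def sum.distrib ..
  finally show ?case using IH by simp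
qed

section \<open>Hypermetric inequalities\<close>

text \<open>Coefficients of a hypermetric inequality on the vertices \<open>0, \<dots>, N + 1\<close>: integers summing
  to \<open>1\<close>, so that \<open>\<Sum>\<^sub>i\<^sub><\<^sub>j b\<^sub>i b\<^sub>j x\<^sub>i\<^sub>j \<le> 0\<close> holds for every cut vector \<open>x\<close>.\<close>
definition hyp_coeff :: "nat \<Rightarrow> nat set \<Rightarrow> nat \<Rightarrow> int" where
  "hyp_coeff N b i =
    (if i \<in> b then 1 else if i = N then 2 - int (card b) else if i = Suc N then -1 else 0)"

definition hyp_weight :: "nat \<Rightarrow> nat set \<Rightarrow> nat \<times> nat \<Rightarrow> real" where
  "hyp_weight N b e = of_int (hyp_coeff N b (fst e)) * of_int (hyp_coeff N b (snd e))"

lemma sum_hyp_coeff_subset: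
  assumes "a \<subseteq> {..<N}" "b \<subseteq> {..<N}"
  shows "(\<Sum>i\<in>a. hyp_coeff N b i) = int (card (a \<inter> b))"
proof -
  have "finite a" using assms(1) finite_subset by blast
  moreover have "(\<Sum>i\<in>a. hyp_coeff N b i) = (\<Sum>i\<in>a. of_bool (i \<in> b))"
    using assms by (intro sum.cong) (auto simp: hyp_coeff_def)
  ultimately show ?thesis by (simp add: Int_def)
qed

lemma sum_hyp_coeff:
  assumes "b \<subseteq> {..<N}"
  shows "(\<Sum>i<Suc (Suc N). hyp_coeff N b i) = 1"
  using sum_hyp_coeff_subset[OF order_refl assms] assms
  by (auto simp: hyp_coeff_def Int_absorb1)

lemma sum_hyp_coeff_insert:
  assumes "a \<subseteq> {..<N}" "b \<subseteq> {..<N}"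
  shows "(\<Sum>i\<in>{..<Suc (Suc N)} \<inter> insert (Suc N) a. hyp_coeff N b i) = int (card (a \<inter> b)) - 1"
proof -
  have "{..<Suc (Suc N)} \<inter> insert (Suc N) a = insert (Suc N) a" "Suc N \<notin> a" "Suc N \<notin> b"
    using assms by auto
  moreover have "finite a" using assms(1) finite_subset by blast
  ultimately show ?thesis using sum_hyp_coeff_subset[OF assms] by (simp add: hyp_coeff_def)
qed

lemma hyp_weight_cut_vec:
  fixes X :: "nat set"
  assumes "b \<subseteq> {..<N}"
  defines "t \<equiv> (\<Sum>i\<in>{..<Suc (Suc N)} \<inter> X. hyp_coeff N b i)"
  shows "(\<Sum>e\<in>edges_K (Suc (Suc N)). hyp_weight N b e * cut_vec (Suc (Suc N)) X e)
       = of_int (t * (1 - t))"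
proof -
  have complement: "(\<Sum>i\<in>{..<Suc (Suc N)} - X. hyp_coeff N b i) = 1 - t"
    using sum.Int_Diff[of "{..<Suc (Suc N)}" "hyp_coeff N b" X] sum_hyp_coeff[OF assms(1)]
    unfolding t_def by simp
  have "(\<Sum>e\<in>edges_K (Suc (Suc N)). hyp_weight N b e * cut_vec (Suc (Suc N)) X e)
      = of_int (\<Sum>i\<in>{..<Suc (Suc N)} \<inter> X. hyp_coeff N b i)
        * of_int (\<Sum>i\<in>{..<Suc (Suc N)} - X. hyp_coeff N b i)"
    using sum_edges_K_cut_vec[of "\<lambda>i. of_int (hyp_coeff N b i)" "Suc (Suc N)" X]
    unfolding hyp_weight_def by simp
  then show ?thesis unfolding complement t_def by simp
qed

lemma hyp_weight_cut_vec_nonpos: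
  assumes "b \<subseteq> {..<N}"
  shows "(\<Sum>e\<in>edges_K (Suc (Suc N)). hyp_weight N b e * cut_vec (Suc (Suc N)) X e) \<le> 0"
proof -
  have "t * (1 - t) \<le> 0" for t :: int
    by (cases "t \<le> 0") (auto intro: mult_nonpos_nonneg mult_nonneg_nonpos)
  then show ?thesis unfolding hyp_weight_cut_vec[OF assms] by (simp only: of_int_le_0_iff)
qed

section \<open>Extended formulations of the pair \<open>CUT n\<close>, \<open>\<rho> CUT n\<close>\<close>

locale CUT_EF = EF_system "edges_K n" m r E F g
  for n m r E F g +
  fixes N :: nat and \<rho> :: real
  assumes n_eq: "n = Suc (Suc N)" and one_le_rho: "1 \<le> \<rho>"
    and CUT_subset: "CUT n \<subseteq> EF_proj (edges_K n) m r E F g"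
    and subset_scale_set: "EF_proj (edges_K n) m r E F g \<subseteq> scale_set \<rho> (CUT n)"
begin

lemma lift_in_scale_set: "lift x y \<Longrightarrow> x \<in> scale_set \<rho> (CUT n)"
  using subset_scale_set EF_proj_iff_lift by blast

lemma lift_lift_of_cut_vec: "X \<subseteq> {..<n} \<Longrightarrow> lift (cut_vec n X) (lift_of (cut_vec n X))"
  using CUT_subset cut_vec_in_CUT lift_lift_of by blast

lemma valid_hyp_weight:
  assumes "b \<subseteq> {..<N}"
  shows "valid 0 (hyp_weight N b)"
  unfolding valid_def slack_def
proof (intro allI impI)
  fix x y assume "lift x y"
  then have "(\<Sum>e\<in>edges_K n. hyp_weight N b e * x e) \<le> 0"
    using scale_set_CUT_le_0[OF _ lift_in_scale_set] hyp_weight_cut_vec_nonpos[OF assms] one_le_rho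
    unfolding n_eq by simp
  then show "0 \<le> 0 - (\<Sum>e\<in>edges_K n. hyp_weight N b e * x e)" by simp
qed

lemma slack_hyp_weight_cut_vec:
  assumes "a \<subseteq> {..<N}" "b \<subseteq> {..<N}"
  shows "slack 0 (hyp_weight N b) (cut_vec n (insert (Suc N) a))
       = (real (card (a \<inter> b)) - 1) * (real (card (a \<inter> b)) - 2)"
  unfolding slack_def unfolding n_eq hyp_weight_cut_vec[OF assms(2)] sum_hyp_coeff_insert[OF assms]
  by (simp add: algebra_simps)

text \<open>The \<open>i\<close>-th rectangle of the slack matrix with rows \<open>a \<union> {N + 1}\<close> (cut vectors) and
  columns \<open>b\<close> (hypermetric inequalities).\<close>
definition in_support :: "nat \<Rightarrow> nat set \<Rightarrow> bool" where
  "in_support i a \<longleftrightarrow> 0 < lift_of (cut_vec n (insert (Suc N) a)) i"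

definition positive_on_support :: "nat \<Rightarrow> nat set \<Rightarrow> bool" where
  "positive_on_support i b \<longleftrightarrow> (\<forall>a\<in>Pow {..<N}. in_support i a \<longrightarrow>
     0 < slack 0 (hyp_weight N b) (cut_vec n (insert (Suc N) a)))"

lemma lift_lift_of_cut_vec_insert: "a \<subseteq> {..<N} \<Longrightarrow>
    lift (cut_vec n (insert (Suc N) a)) (lift_of (cut_vec n (insert (Suc N) a)))"
  by (rule lift_lift_of_cut_vec) (auto simp: n_eq)

lemma unique_intersection_free_rectangle:
  "unique_intersection_free N (in_support i) (positive_on_support i)"
  unfolding unique_intersection_free_def positive_on_support_def
  using slack_hyp_weight_cut_vec by fastforce

lemma disjoint_pair_covered:
  assumes a: "a \<subseteq> {..<N}" and b: "b \<subseteq> {..<N}" and "a \<inter> b = {}" "b \<noteq> {}"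
  shows "\<exists>i<r. in_support i a \<and> positive_on_support i b"
proof -
  let ?y = "lift_of (cut_vec n (insert (Suc N) a))"
  have pos: "0 < slack 0 (hyp_weight N b) (cut_vec n (insert (Suc N) a))"
    using slack_hyp_weight_cut_vec[OF a b] \<open>a \<inter> b = {}\<close> by simp
  have "\<exists>i<r. 0 < ?y i"
  proof (rule ccontr)
    assume "\<not> ?thesis"
    then have "\<forall>i<r. ?y i = 0" using lift_nonneg[OF lift_lift_of_cut_vec_insert[OF a]] by force
    obtain c where c: "c \<in> b" using \<open>b \<noteq> {}\<close> by blast
    then have c_le: "{c} \<subseteq> {..<N}" using b by auto
    have "slack 0 (hyp_weight N b) (cut_vec n (insert (Suc N) a))
        \<le> slack 0 (hyp_weight N b) (cut_vec n (insert (Suc N) {c}))"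
      by (rule slack_le_if_lift_vanishes[OF valid_hyp_weight[OF b] lift_lift_of_cut_vec_insert[OF a]
            \<open>\<forall>i<r. ?y i = 0\<close> lift_lift_of_cut_vec_insert[OF c_le]])
    also have "\<dots> = 0" using slack_hyp_weight_cut_vec[OF c_le b] c by simp
    finally show False using pos by simp
  qed
  then obtain i where "i < r" "0 < ?y i" and forcing:
    "\<forall>z yz. lift z yz \<longrightarrow> 0 < yz i \<longrightarrow> 0 < slack 0 (hyp_weight N b) z"
    using exists_coordinate_forcing_positive_slack[OF valid_hyp_weight[OF b] lift_lift_of_cut_vec_insert[OF a] pos]
    by blast
  then have "positive_on_support i b"
    unfolding positive_on_support_def in_support_def using lift_lift_of_cut_vec_insert by blast
  with \<open>i < r\<close> \<open>0 < ?y i\<close> show ?thesis unfolding in_support_def by blast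
qed

lemma three_pow_le: "3 ^ N \<le> (r + 1) * 2 ^ N"
proof -
  let ?P = "Pow {..<N}"
  have "3 ^ N = disjoint_pairs N (\<lambda>_. True) (\<lambda>_. True)" by (simp add: disjoint_pairs_all)
  also have "\<dots> \<le> (\<Sum>a\<in>?P. \<Sum>b\<in>?P. of_bool (b = {}) +
      (\<Sum>i<r. if in_support i a \<and> positive_on_support i b \<and> a \<inter> b = {} then 1 else 0))"
    unfolding disjoint_pairs_def
  proof (intro sum_mono)
    fix a b assume "a \<in> ?P" "b \<in> ?P"
    show "(if True \<and> True \<and> a \<inter> b = {} then 1 else 0) \<le> of_bool (b = {}) +
        (\<Sum>i<r. if in_support i a \<and> positive_on_support i b \<and> a \<inter> b = {} then 1 else (0::nat))"
    proof (cases "a \<inter> b = {} \<and> b \<noteq> {}")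
      case True
      then obtain i where "i < r" "in_support i a \<and> positive_on_support i b"
        using disjoint_pair_covered[of a b] \<open>a \<in> ?P\<close> \<open>b \<in> ?P\<close> by auto
      then have "1 \<le> (\<Sum>i<r. if in_support i a \<and> positive_on_support i b \<and> a \<inter> b = {} then 1 else (0::nat))"
        using True by (intro member_le_sum[of i, THEN order_trans[rotated]]) auto
      then show ?thesis using True by simp
    qed auto
  qed
  also have "\<dots> = (\<Sum>a\<in>?P. \<Sum>b\<in>?P. of_bool (b = {})) +
      (\<Sum>i<r. disjoint_pairs N (in_support i) (positive_on_support i))"
  proof -
    have "(\<Sum>a\<in>?P. \<Sum>b\<in>?P. \<Sum>i<r. h i a b) = (\<Sum>i<r. \<Sum>a\<in>?P. \<Sum>b\<in>?P. h i a b)"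
      for h :: "nat \<Rightarrow> nat set \<Rightarrow> nat set \<Rightarrow> nat"
      by (subst sum.swap) (rule sum.cong[OF refl], rule sum.swap)
    then show ?thesis unfolding disjoint_pairs_def sum.distrib by simp
  qed
  also have "(\<Sum>a\<in>?P. \<Sum>b\<in>?P. of_bool (b = {})) = (2::nat) ^ N"
    by (simp add: card_Pow)
  also have "(\<Sum>i<r. disjoint_pairs N (in_support i) (positive_on_support i)) \<le> (\<Sum>i<r. 2 ^ N)"
    by (intro sum_mono disjoint_pairs_le_if_unique_intersection_free unique_intersection_free_rectangle)
  finally show ?thesis by (simp add: algebra_simps)
qed

text \<open>Needed for small \<open>n\<close>: the segment between the cut vectors of \<open>{}\<close> and \<open>{0}\<close> has two
  endpoints, each the unique minimiser of a valid inequality in coordinate \<open>(0, 1)\<close>.\<close>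
lemma two_le_r: "2 \<le> r"
proof -
  define u :: "nat \<times> nat \<Rightarrow> real" where "u e = of_bool (e = (0, 1))" for e
  have "(0, 1) \<in> edges_K n" using n_eq by (simp add: edges_K_def)
  then have "(\<Sum>d\<in>edges_K n. u d * x d) = x (0, 1)" for x
    using finite_edges_K by (simp add: u_def sum.delta' flip: of_bool_def[of "_ = _"])
  then have lower: "slack 0 (\<lambda>e. - u e) x = x (0, 1)" and upper: "slack \<rho> u x = \<rho> - x (0, 1)" for x
    by (simp_all add: slack_def sum_negf)
  have valid_lower: "valid 0 (\<lambda>e. - u e)" and valid_upper: "valid \<rho> u"
    using scale_set_CUT_bounds[OF _ lift_in_scale_set] one_le_rho
    by (auto simp: valid_def lower upper)
  define y0 where "y0 = lift_of (cut_vec n {})"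
  define y1 where "y1 = lift_of (cut_vec n {0})"
  have y0: "lift (cut_vec n {}) y0" and y1: "lift (cut_vec n {0}) y1"
    unfolding y0_def y1_def by (intro lift_lift_of_cut_vec, simp add: n_eq)+
  have at_0: "cut_vec n {} (0, 1) = 0" and at_1: "cut_vec n {0} (0, 1) = 1"
    using \<open>(0, 1) \<in> edges_K n\<close> by (simp_all add: cut_vec_def)
  have "\<exists>i<r. 0 < y1 i"
  proof (rule ccontr)
    assume "\<not> ?thesis"
    then have "\<forall>i<r. y1 i = 0" using lift_nonneg[OF y1] by force
    from slack_le_if_lift_vanishes[OF valid_lower y1 this y0] show False
      unfolding lower at_0 at_1 by simp
  qed
  moreover have "0 < slack 0 (\<lambda>e. - u e) (cut_vec n {0})" unfolding lower at_1 by simp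
  ultimately obtain i where "i < r"
    and forcing: "\<forall>z yz. lift z yz \<longrightarrow> 0 < yz i \<longrightarrow> 0 < slack 0 (\<lambda>e. - u e) z"
    using exists_coordinate_forcing_positive_slack[OF valid_lower y1] by blast
  moreover have "slack 0 (\<lambda>e. - u e) (cut_vec n {}) = 0" unfolding lower at_0 ..
  ultimately have "\<not> 0 < y0 i" using y0 by force
  show "2 \<le> r"
  proof (rule ccontr)
    assume "\<not> 2 \<le> r"
    then have "r = 1" "i = 0" using \<open>i < r\<close> by auto
    then have "\<forall>j<r. y0 j = 0" using \<open>\<not> 0 < y0 i\<close> lift_nonneg[OF y0 \<open>i < r\<close>] by auto
    from slack_le_if_lift_vanishes[OF valid_upper y0 this y1] show False
      unfolding upper at_0 at_1 by simp
  qed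
qed

end

lemma two_powr_le_of_count:
  fixes N r :: nat
  assumes count: "3 ^ N \<le> (r + 1) * 2 ^ N" and r: "2 \<le> r"
  shows "2 powr (real (Suc (Suc N)) / 6) \<le> real r"
proof -
  have "2 ^ N * 4 ^ N = (8::nat) ^ N" by (simp flip: power_mult_distrib)
  also have "\<dots> \<le> 9 ^ N" by (rule power_mono) auto
  also have "\<dots> = 3 ^ N * 3 ^ N" by (simp flip: power_mult_distrib)
  also have "\<dots> \<le> ((r + 1) * 2 ^ N) ^ 2"
    using mult_le_mono[OF count count] by (simp add: power2_eq_square)
  also have "\<dots> = (r + 1) ^ 2 * (2 ^ N) ^ 2" by (rule power_mult_distrib)
  also have "\<dots> = (r + 1) ^ 2 * 4 ^ N" by (simp add: power2_eq_square flip: power_mult_distrib)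
  finally have "2 ^ N \<le> (r + 1) ^ 2" by simp
  also have "\<dots> \<le> (2 * r) ^ 2" using r by (intro power_mono) auto
  finally have "2 ^ N * 16 \<le> 4 * r ^ 2 * 16" by simp
  also have "\<dots> \<le> 4 * r ^ 2 * r ^ 4" using power_mono[OF r, of 4] by simp
  also have "\<dots> = 4 * r ^ 6" by (simp flip: power_add)
  finally have "2 ^ Suc (Suc N) \<le> r ^ 6" by simp
  then have pow_le: "(2::real) ^ Suc (Suc N) \<le> real r ^ 6"
    by (metis of_nat_le_iff of_nat_numeral of_nat_power)
  have "2 powr (real (Suc (Suc N)) / 6) = (2 powr real (Suc (Suc N))) powr (1 / 6)"
    by (simp add: powr_powr)
  also have "\<dots> = (2 ^ Suc (Suc N)) powr (1 / 6)" by (subst powr_realpow) simp_all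
  also have "\<dots> \<le> (real r ^ 6) powr (1 / 6)" using pow_le by (intro powr_mono2) simp_all
  also have "\<dots> = (real r powr 6) powr (1 / 6)" using r by (simp add: powr_realpow)
  also have "\<dots> = real r" using r by (subst powr_powr) simp
  finally show ?thesis .
qed

theorem proposition3:
  "\<exists>c :: real. c > 0 \<and>
     (\<forall>\<rho> :: real. \<rho> \<ge> 1 \<longrightarrow> (\<forall>n :: nat. n \<ge> 2 \<longrightarrow>
        real (xc (edges_K n) (CUT n) (scale_set \<rho> (CUT n))) \<ge> 2 powr (c * real n)))"
proof (intro exI[of _ "1/6"] conjI allI impI)
  fix \<rho> :: real and n :: nat assume "1 \<le> \<rho>" "2 \<le> n"
  let ?r = "xc (edges_K n) (CUT n) (scale_set \<rho> (CUT n))"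
  have "has_EF (edges_K n) (CUT n) (scale_set \<rho> (CUT n)) ?r"
    unfolding xc_def by (rule LeastI_ex[OF has_EF_CUT[OF \<open>1 \<le> \<rho>\<close>]])
  then obtain m E F g where "CUT n \<subseteq> EF_proj (edges_K n) m ?r E F g"
    "EF_proj (edges_K n) m ?r E F g \<subseteq> scale_set \<rho> (CUT n)"
    unfolding has_EF_def by blast
  then interpret CUT_EF n m ?r E F g "n - 2" \<rho>
    using \<open>1 \<le> \<rho>\<close> \<open>2 \<le> n\<close> by unfold_locales auto
  show "2 powr (1/6 * real n) \<le> real ?r"
    using two_powr_le_of_count[OF three_pow_le two_le_r] n_eq by (simp add: mult.commute)
qed (simp)

end
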